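(* Let $t\in\mathbb{R}^d$, $h>0$, and $\kappa_t:\mathbb{R}^d\to\mathbb{R}_{\ge0}$, $\kappa_t(x)=e^{-\frac{\|x-t\|^2}{2h^2}}$, with $\mathbb{R}^d$ carrying the Euclidean metric. Let $g(x,x')=g_0(\|x-x'\|)$ be a smooth growth function. Let $(w^*,z^* )$ with $w^*\ne z^*$ be such that $B^*(t)=\frac{|\kappa_t(w^* )-\kappa_t(z^* )|}{\|w^*-z^*\|\,g(t,z^* )}$, and assume $z^*\ne t$. Then there is a point $w_L$ on the line connecting $z^*$ and $t$ such that $\frac{|\kappa_t(w_L)-\kappa_t(z^* )|}{\|w_L-z^*\|\,g(t,z^* )}\ge B^*(t)$.
   Context: A smooth growth function is $g(x,x')=g_0(\|x-x'\|)$ with $g_0:\mathbb{R}_{\ge0}\to\mathbb{R}_{\ge1}$ monotonically increasing, $g_0(0)=1$, $g_0(r_1+r_2)\le g_0(r_1)g_0(r_2)$. $B^*(t)$ denotes the $g$-smooth sensitivity of $\kappa_t$ at the point $t$. *)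

theory Defs
  imports "HOL-Analysis.Analysis"
begin

definition smooth_growth :: "(real \<Rightarrow> real) \<Rightarrow> bool" where
  "smooth_growth g0 \<longleftrightarrow>
     mono_on {0..} g0 \<and> (\<forall>r\<ge>0. g0 r \<ge> 1) \<and> g0 0 = 1 \<and>
     (\<forall>r1\<ge>0. \<forall>r2\<ge>0. g0 (r1 + r2) \<le> g0 r1 * g0 r2)"

definition growth :: "(real \<Rightarrow> real) \<Rightarrow> 'a::real_normed_vector \<Rightarrow> 'a \<Rightarrow> real" where
  "growth g0 x x' = g0 (norm (x - x'))"

definition kappa :: "'a::euclidean_space \<Rightarrow> real \<Rightarrow> 'a \<Rightarrow> real" where
  "kappa t h x = exp (- (norm (x - t))\<^sup>2 / (2 * h\<^sup>2))"

definition smooth_sens :: "(real \<Rightarrow> real) \<Rightarrow> ('a::real_normed_vector \<Rightarrow> real) \<Rightarrow> 'a \<Rightarrow> real" where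
  "smooth_sens g0 f t =
     (SUP p \<in> {(w, z). w \<noteq> z}. \<bar>f (fst p) - f (snd p)\<bar> /
                                   (norm (fst p - snd p) * growth g0 t (snd p)))"

end

theory Submission
  imports Defs
begin

text \<open>The kernel \<open>\<kappa>\<^sub>t\<close> is radial about \<open>t\<close>. Given \<open>(w, z)\<close>, the point \<open>w\<^sub>L\<close> on the ray from \<open>t\<close>
  through \<open>z\<close> with \<open>\<parallel>w\<^sub>L - t\<parallel> = \<parallel>w - t\<parallel>\<close> has the same kernel value as \<open>w\<close>, while by the reverse
  triangle inequality \<open>\<parallel>w\<^sub>L - z\<parallel> = \<bar>\<parallel>w - t\<parallel> - \<parallel>z - t\<parallel>\<bar> \<le> \<parallel>w - z\<parallel>\<close>; so its difference quotient
  is at least as large. If \<open>\<kappa>\<^sub>t(w) = \<kappa>\<^sub>t(z)\<close> this degenerates and \<open>w\<^sub>L = t\<close> does the job.\<close>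

lemma point_on_line_at_distance:
  fixes z c :: "'a::real_normed_vector"
  assumes "z \<noteq> c" and "a \<ge> 0"
  defines "p \<equiv> c + (a / norm (z - c)) *\<^sub>R (z - c)"
  shows "p = z + (1 - a / norm (z - c)) *\<^sub>R (c - z)"
    and "norm (p - c) = a"
    and "norm (p - z) = \<bar>a - norm (z - c)\<bar>"
proof -
  have r: "norm (z - c) > 0"
    using assms(1) by simp
  show "p = z + (1 - a / norm (z - c)) *\<^sub>R (c - z)"
    unfolding p_def by (simp add: algebra_simps)
  show "norm (p - c) = a"
    unfolding p_def using r assms(2) by simp
  have "p - z = (a / norm (z - c) - 1) *\<^sub>R (z - c)"
    unfolding p_def by (simp add: algebra_simps)
  then show "norm (p - z) = \<bar>a - norm (z - c)\<bar>"
    using r by (simp add: divide_simps abs_mult)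
qed

lemma radial_difference_quotient_on_line:
  fixes f :: "'a::real_normed_vector \<Rightarrow> real"
  assumes radial: "\<And>x y. norm (x - t) = norm (y - t) \<Longrightarrow> f x = f y"
    and "w \<noteq> z" and "z \<noteq> t"
  shows "\<exists>wL. (\<exists>s. wL = z + s *\<^sub>R (t - z)) \<and> wL \<noteq> z \<and>
           \<bar>f w - f z\<bar> / norm (w - z) \<le> \<bar>f wL - f z\<bar> / norm (wL - z)"
proof (cases "f w = f z")
  case True
  show ?thesis
  proof (intro exI conjI)
    show "t = z + 1 *\<^sub>R (t - z)"
      by simp
    show "t \<noteq> z"
      using \<open>z \<noteq> t\<close> by simp
    show "\<bar>f w - f z\<bar> / norm (w - z) \<le> \<bar>f t - f z\<bar> / norm (t - z)"
      using True by simp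
  qed
next
  case False
  define a where "a = norm (w - t)"
  define wL where "wL = t + (a / norm (z - t)) *\<^sub>R (z - t)"
  note wL = point_on_line_at_distance[OF \<open>z \<noteq> t\<close> norm_ge_zero[of "w - t"],
                                      folded a_def, folded wL_def]
  have "a \<noteq> norm (z - t)"
    using False radial unfolding a_def by blast
  then have dist_pos: "norm (wL - z) > 0"
    using wL(3) by simp
  have "norm (wL - z) \<le> norm (w - z)"
    using wL(3) norm_triangle_ineq3[of "w - t" "z - t"] unfolding a_def by simp
  moreover have "f wL = f w"
    using radial wL(2) unfolding a_def by blast
  ultimately have "\<bar>f w - f z\<bar> / norm (w - z) \<le> \<bar>f wL - f z\<bar> / norm (wL - z)"
    using dist_pos by (intro frac_le) simp_all
  moreover have "wL \<noteq> z"
    using dist_pos by auto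
  ultimately show ?thesis
    using wL(1) by blast
qed

lemma kappa_radial:
  "norm (x - t) = norm (y - t) \<Longrightarrow> kappa t h x = kappa t h y"
  unfolding kappa_def by simp

lemma growth_nonneg:
  "smooth_growth g0 \<Longrightarrow> growth g0 x y \<ge> 0"
  unfolding smooth_growth_def growth_def by (meson norm_ge_zero order_trans zero_le_one)

theorem mainTheorem13:
  fixes t w z :: "'a::euclidean_space" and h :: real and g0 :: "real \<Rightarrow> real"
  assumes "h > 0"
    and "smooth_growth g0"
    and "w \<noteq> z"
    and "smooth_sens g0 (kappa t h) t =
           \<bar>kappa t h w - kappa t h z\<bar> / (norm (w - z) * growth g0 t z)"
    and "z \<noteq> t"
  shows "\<exists>wL. (\<exists>s::real. wL = z + s *\<^sub>R (t - z)) \<and> wL \<noteq> z \<and>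
           \<bar>kappa t h wL - kappa t h z\<bar> / (norm (wL - z) * growth g0 t z)
             \<ge> smooth_sens g0 (kappa t h) t"
proof -
  obtain wL where on_line: "\<exists>s::real. wL = z + s *\<^sub>R (t - z)" and "wL \<noteq> z"
    and quotient_le: "\<bar>kappa t h w - kappa t h z\<bar> / norm (w - z)
                        \<le> \<bar>kappa t h wL - kappa t h z\<bar> / norm (wL - z)"
    using radial_difference_quotient_on_line[where f = "kappa t h",
            OF kappa_radial \<open>w \<noteq> z\<close> \<open>z \<noteq> t\<close>]
    by blast
  have "smooth_sens g0 (kappa t h) t
          = \<bar>kappa t h w - kappa t h z\<bar> / norm (w - z) / growth g0 t z"
    using assms(4) by simp
  also have "\<dots> \<le> \<bar>kappa t h wL - kappa t h z\<bar> / norm (wL - z) / growth g0 t z"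
    using quotient_le growth_nonneg[OF \<open>smooth_growth g0\<close>] by (rule divide_right_mono)
  also have "\<dots> = \<bar>kappa t h wL - kappa t h z\<bar> / (norm (wL - z) * growth g0 t z)"
    by simp
  finally show ?thesis
    using on_line \<open>wL \<noteq> z\<close> by blast
qed

end
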